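(* Let $\mathcal{F}$ be the class of planar graphs of maximum degree at most $4$, and let $G \in \mathcal{F}$ be a graph with $\chi_2(G) > 12$ that minimizes the pair $(|V(G)|, |E(G)|)$ (lexicographically) among all graphs of $\mathcal{F}$ with $\chi_2 > 12$, with a fixed planar embedding. Then $G$ does not contain a $3$-vertex incident to two $4$-faces.
   Context: All graphs are finite, without loops or parallel edges. A distance-$2$ coloring of a graph is an assignment of colors to its vertices such that any two distinct vertices at distance at most $2$ receive different colors; $\chi_2(G)$ is the minimum number of colors in a distance-$2$ coloring of $G$. A $d$-vertex is a vertex of degree $d$. The degree of a face is the number of edges incident to it, counted with multiplicity; a $d$-face is a face of degree $d$. A vertex is incident to a face if it lies on its boundary. *)

theory Defs
  imports Main
begin

definition simple_graph :: "'a set \<Rightarrow> 'a set set \<Rightarrow> bool" where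
  "simple_graph V E \<longleftrightarrow> finite V \<and>
     (\<forall>e\<in>E. \<exists>u v. u \<noteq> v \<and> u \<in> V \<and> v \<in> V \<and> e = {u, v})"

definition adj :: "'a set set \<Rightarrow> 'a \<Rightarrow> 'a \<Rightarrow> bool" where
  "adj E u v \<longleftrightarrow> {u, v} \<in> E"

definition degree :: "'a set set \<Rightarrow> 'a \<Rightarrow> nat" where
  "degree E v = card {u. {u, v} \<in> E}"

definition max_degree_le :: "'a set \<Rightarrow> 'a set set \<Rightarrow> nat \<Rightarrow> bool" where
  "max_degree_le V E k \<longleftrightarrow> (\<forall>v\<in>V. degree E v \<le> k)"

definition dist_le2 :: "'a set \<Rightarrow> 'a set set \<Rightarrow> 'a \<Rightarrow> 'a \<Rightarrow> bool" where
  "dist_le2 V E u v \<longleftrightarrow> adj E u v \<or> (\<exists>w\<in>V. adj E u w \<and> adj E w v)"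

definition dist2_coloring :: "'a set \<Rightarrow> 'a set set \<Rightarrow> ('a \<Rightarrow> nat) \<Rightarrow> nat \<Rightarrow> bool" where
  "dist2_coloring V E c k \<longleftrightarrow> (\<forall>v\<in>V. c v < k) \<and>
     (\<forall>u\<in>V. \<forall>v\<in>V. u \<noteq> v \<and> dist_le2 V E u v \<longrightarrow> c u \<noteq> c v)"

definition chi2 :: "'a set \<Rightarrow> 'a set set \<Rightarrow> nat" where
  "chi2 V E = (LEAST k. \<exists>c. dist2_coloring V E c k)"

text \<open>A rotation system sigma is a permutation of the darts fixing the tail, whose restriction to
  the darts leaving any vertex is a single cycle (the cyclic order of edges around the vertex).\<close>

definition darts :: "'a set set \<Rightarrow> ('a \<times> 'a) set" where
  "darts E = {(u, v). {u, v} \<in> E}"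

definition rotation_system :: "'a set \<Rightarrow> 'a set set \<Rightarrow> ('a \<times> 'a \<Rightarrow> 'a \<times> 'a) \<Rightarrow> bool" where
  "rotation_system V E \<sigma> \<longleftrightarrow> bij_betw \<sigma> (darts E) (darts E) \<and>
     (\<forall>d\<in>darts E. fst (\<sigma> d) = fst d) \<and>
     (\<forall>d\<in>darts E. \<forall>d'\<in>darts E. fst d = fst d' \<longrightarrow> (\<exists>n. (\<sigma> ^^ n) d = d'))"

definition face_perm :: "('a \<times> 'a \<Rightarrow> 'a \<times> 'a) \<Rightarrow> 'a \<times> 'a \<Rightarrow> 'a \<times> 'a" where
  "face_perm \<sigma> d = \<sigma> (snd d, fst d)"

definition face_of :: "('a \<times> 'a \<Rightarrow> 'a \<times> 'a) \<Rightarrow> 'a \<times> 'a \<Rightarrow> ('a \<times> 'a) set" where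
  "face_of \<sigma> d = {(face_perm \<sigma> ^^ n) d | n. True}"

definition faces :: "'a set set \<Rightarrow> ('a \<times> 'a \<Rightarrow> 'a \<times> 'a) \<Rightarrow> ('a \<times> 'a) set set" where
  "faces E \<sigma> = face_of \<sigma> ` darts E"

text \<open>Degree of a face = number of edge sides on its boundary walk = number of darts in it
  (edges counted with multiplicity). A vertex is incident to a face if it lies on its boundary.\<close>
definition face_degree :: "('a \<times> 'a) set \<Rightarrow> nat" where
  "face_degree f = card f"

definition incident_face :: "'a \<Rightarrow> ('a \<times> 'a) set \<Rightarrow> bool" where
  "incident_face v f \<longleftrightarrow> (\<exists>d\<in>f. fst d = v)"

definition reach :: "'a set \<Rightarrow> 'a set set \<Rightarrow> 'a \<Rightarrow> 'a \<Rightarrow> bool" where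
  "reach V E = (\<lambda>u v. u \<in> V \<and> v \<in> V \<and> adj E u v)\<^sup>*\<^sup>*"

definition component :: "'a set \<Rightarrow> 'a set set \<Rightarrow> 'a \<Rightarrow> 'a set" where
  "component V E v = {w \<in> V. reach V E v w}"

definition planar_rotation_system :: "'a set \<Rightarrow> 'a set set \<Rightarrow> ('a \<times> 'a \<Rightarrow> 'a \<times> 'a) \<Rightarrow> bool" where
  "planar_rotation_system V E \<sigma> \<longleftrightarrow> rotation_system V E \<sigma> \<and>
     (\<forall>v\<in>V. let C = component V E v in
        {e\<in>E. e \<subseteq> C} \<noteq> {} \<longrightarrow>
        int (card C) - int (card {e\<in>E. e \<subseteq> C})
          + int (card {f \<in> faces E \<sigma>. \<exists>d\<in>f. fst d \<in> C}) = 2)"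

definition planar :: "'a set \<Rightarrow> 'a set set \<Rightarrow> bool" where
  "planar V E \<longleftrightarrow> (\<exists>\<sigma>. planar_rotation_system V E \<sigma>)"

definition class_F :: "'a set \<Rightarrow> 'a set set \<Rightarrow> bool" where
  "class_F V E \<longleftrightarrow> simple_graph V E \<and> planar V E \<and> max_degree_le V E 4"

end

theory Submission
  imports Defs "HOL-Combinatorics.Orbits"
begin

text \<open>
  The rotation at a vertex v of degree 3 is a 3-cycle, so two distinct faces at v lie on the two
  sides of a single edge vu; if both are 4-faces they are quadrangles v u w1 w2 and u v z1 z2.
  Deleting uv merges them into the hexagon u w1 w2 v z1 z2, and since u and v stay connected
  through w1 and w2, every component keeps its Euler count: G - uv is again a planar graph of
  maximum degree at most 4, smaller than G, hence it has a distance-2 colouring with 12 colours.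
  Only v loses constraints, because u stays at distance 2 from the other neighbours of v,
  namely w2 (via w1) and z1 (via z2). At most 3 + 3 * 3 - 1 = 11 vertices lie within distance 2 of v, w1 being
  a common neighbour of u and w2, so v can be recoloured and G is 12-colourable.
\<close>

section \<open>Orbits of bijections of finite sets\<close>

lemma funpow_closed: "(\<And>x. x \<in> A \<Longrightarrow> f x \<in> A) \<Longrightarrow> x \<in> A \<Longrightarrow> (f ^^ n) x \<in> A"
  by (induction n) auto

lemma funpow_commute_on:
  assumes "\<And>x. x \<in> A \<Longrightarrow> f x \<in> A" "\<And>x. x \<in> A \<Longrightarrow> g (h x) = h (f x)" "x \<in> A"
  shows "(g ^^ n) (h x) = h ((f ^^ n) x)"
proof (induction n)
  case (Suc n)
  have "(f ^^ n) x \<in> A" using assms(1,3) by (rule funpow_closed)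
  then show ?case using Suc assms(2) by simp
qed simp

lemma self_in_orbit_if_bij_betw:
  assumes "finite D" "bij_betw f D D" "x \<in> D"
  shows "x \<in> orbit f x"
proof -
  define g where "g y = (if y \<in> D then f y else y)" for y
  have "g permutes D"
    using assms(2) by (intro bij_imp_permutes) (auto simp: g_def cong: bij_betw_cong)
  then have "x \<in> orbit g x"
    using assms(1) by (intro permutation_self_in_orbit) (auto simp: permutation_permutes)
  moreover have "orbit g x = orbit f x"
    using assms(2,3) by (intro orbit_cong0[where A = D]) (auto simp: g_def bij_betw_def)
  ultimately show ?thesis by simp
qed

lemma orbit_eq_if_in_orbit:
  assumes "x \<in> orbit f x" "y \<in> orbit f x"
  shows "orbit f y = orbit f x"
  using assms orbit_swap orbit_trans by (metis subsetI subset_antisym)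

lemma orbit_funpow_card:
  assumes "x \<in> orbit f x"
  shows "orbit f x = (\<lambda>i. (f ^^ i) x) ` {..<card (orbit f x)}"
    and "inj_on (\<lambda>i. (f ^^ i) x) {..<card (orbit f x)}"
    and "(f ^^ card (orbit f x)) x = x"
proof -
  have card: "card (orbit f x) = funpow_dist1 f x x"
    using orbit_conv_funpow_dist1[OF assms] inj_on_funpow_dist1[OF assms]
    by (simp add: card_image)
  show "orbit f x = (\<lambda>i. (f ^^ i) x) ` {..<card (orbit f x)}"
    unfolding card using orbit_conv_funpow_dist1[OF assms] by (simp add: atLeast0LessThan)
  show "inj_on (\<lambda>i. (f ^^ i) x) {..<card (orbit f x)}"
    unfolding card using inj_on_funpow_dist1[OF assms] by (simp add: atLeast0LessThan)
  show "(f ^^ card (orbit f x)) x = x"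
    unfolding card by (rule funpow_dist1_prop[OF assms])
qed

lemma orbit_card_3:
  assumes "x \<in> orbit f x" "card (orbit f x) = 3"
  shows "orbit f x = {x, f x, f (f x)}" "distinct [x, f x, f (f x)]" "f (f (f x)) = x"
proof -
  have "{..<3::nat} = {0, 1, 2}" by auto
  then show "orbit f x = {x, f x, f (f x)}" "f (f (f x)) = x"
    using orbit_funpow_card(1,3)[OF assms(1)] assms(2) by (simp_all add: numeral_eq_Suc)
  show "distinct [x, f x, f (f x)]"
    using \<open>orbit f x = _\<close> assms(2) by (intro card_distinct) simp
qed

lemma orbit_card_4:
  assumes "x \<in> orbit f x" "card (orbit f x) = 4"
  shows "orbit f x = {x, f x, f (f x), f (f (f x))}" "distinct [x, f x, f (f x), f (f (f x))]"
    "f (f (f (f x))) = x"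
proof -
  have "{..<4::nat} = {0, 1, 2, 3}" by auto
  then show "orbit f x = {x, f x, f (f x), f (f (f x))}" "f (f (f (f x))) = x"
    using orbit_funpow_card(1,3)[OF assms(1)] assms(2) by (simp_all add: numeral_eq_Suc)
  show "distinct [x, f x, f (f x), f (f (f x))]"
    using \<open>orbit f x = _\<close> assms(2) by (intro card_distinct) simp
qed

section \<open>Darts, neighbours and connectivity\<close>

lemma darts_swap: "(x, y) \<in> darts E \<Longrightarrow> (y, x) \<in> darts E"
  by (simp add: darts_def insert_commute)

lemma dart_endpoints:
  assumes "simple_graph V E" "(x, y) \<in> darts E"
  shows "x \<in> V" "y \<in> V" "x \<noteq> y"
proof -
  obtain p q where "p \<noteq> q" "p \<in> V" "q \<in> V" "{x, y} = {p, q}"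
    using assms unfolding simple_graph_def darts_def by blast
  then show "x \<in> V" "y \<in> V" "x \<noteq> y" by (auto simp: doubleton_eq_iff)
qed

lemma edge_subset_vertices: "simple_graph V E \<Longrightarrow> e \<in> E \<Longrightarrow> e \<subseteq> V"
  unfolding simple_graph_def by auto

lemma finite_darts: "simple_graph V E \<Longrightarrow> finite (darts E)"
proof -
  assume graph: "simple_graph V E"
  then have "darts E \<subseteq> V \<times> V"
    using dart_endpoints[OF graph] by auto
  moreover have "finite V" using graph by (simp add: simple_graph_def)
  ultimately show ?thesis by (simp add: finite_subset)
qed

lemma finite_edges: "simple_graph V E \<Longrightarrow> finite E"
  by (rule finite_subset[of _ "Pow V"]) (auto simp: simple_graph_def)

lemma card_darts_at: "card {d \<in> darts E. fst d = v} = degree E v"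
proof -
  have "{d \<in> darts E. fst d = v} = Pair v ` {u. {u, v} \<in> E}"
    by (auto simp: darts_def insert_commute)
  then show ?thesis
    unfolding degree_def by (simp add: card_image inj_on_def)
qed

definition neighbors :: "'a set set \<Rightarrow> 'a \<Rightarrow> 'a set" where
  "neighbors E v = {u. {u, v} \<in> E}"

lemma degree_eq_card_neighbors: "degree E v = card (neighbors E v)"
  by (simp add: degree_def neighbors_def)

lemma neighbors_iff_dart: "x \<in> neighbors E v \<longleftrightarrow> (v, x) \<in> darts E"
  by (simp add: neighbors_def darts_def insert_commute)

lemma finite_neighbors:
  assumes "simple_graph V E"
  shows "finite (neighbors E v)"
proof (rule finite_subset)
  show "neighbors E v \<subseteq> V" using dart_endpoints(2)[OF assms] by (auto simp: neighbors_iff_dart)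
  show "finite V" using assms by (simp add: simple_graph_def)
qed

lemma adj_iff_dart: "adj E x y \<longleftrightarrow> (x, y) \<in> darts E"
  by (simp add: adj_def darts_def)

lemma reach_refl: "reach V E x x"
  unfolding reach_def by simp

lemma reach_edge: "x \<in> V \<Longrightarrow> y \<in> V \<Longrightarrow> {x, y} \<in> E \<Longrightarrow> reach V E x y"
  unfolding reach_def adj_def by (rule r_into_rtranclp) simp

lemma reach_dart: "simple_graph V E \<Longrightarrow> (x, y) \<in> darts E \<Longrightarrow> reach V E x y"
  using dart_endpoints[of V E x y] by (intro reach_edge) (auto simp: darts_def)

lemma reach_trans: "reach V E x y \<Longrightarrow> reach V E y z \<Longrightarrow> reach V E x z"
  unfolding reach_def by (rule rtranclp_trans)

lemma reach_sym: "reach V E x y \<Longrightarrow> reach V E y x"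
  unfolding reach_def
proof (induction rule: rtranclp_induct)
  case (step y z)
  then show ?case by (auto simp: adj_def insert_commute intro: converse_rtranclp_into_rtranclp)
qed simp

lemma reach_mono: "E' \<subseteq> E \<Longrightarrow> reach V E' x y \<Longrightarrow> reach V E x y"
  unfolding reach_def adj_def by (erule rtranclp_mono[THEN predicate2D, rotated]) auto

lemma component_delete_edge:
  assumes "reach V (E - {{x, y}}) x y"
  shows "component V (E - {{x, y}}) z = component V E z"
proof -
  have "reach V (E - {{x, y}}) p q" if "reach V E p q" for p q
    using that unfolding reach_def
  proof (induction rule: rtranclp_induct)
    case (step q r)
    then have "reach V (E - {{x, y}}) q r"
      using assms reach_sym[OF assms] reach_edge[of q V r "E - {{x, y}}"]
      by (auto simp: adj_def doubleton_eq_iff)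
    then show ?case using step.IH by (simp add: reach_def)
  qed simp
  then show ?thesis
    using reach_mono[of "E - {{x, y}}" E V] by (auto simp: component_def)
qed

lemma card_edges_within_delete_edge:
  assumes "finite E" "{x, y} \<in> E" "{x, y} \<subseteq> C"
  shows "card {e \<in> E - {{x, y}}. e \<subseteq> C} + 1 = card {e \<in> E. e \<subseteq> C}"
proof -
  have "{e \<in> E - {{x, y}}. e \<subseteq> C} = {e \<in> E. e \<subseteq> C} - {{x, y}}" by auto
  moreover have "Suc (card ({e \<in> E. e \<subseteq> C} - {{x, y}})) = card {e \<in> E. e \<subseteq> C}"
    using assms by (intro card_Suc_Diff1) simp_all
  ultimately show ?thesis by simp
qed

lemma darts_delete_edge: "darts (E - {{x, y}}) = darts E - {(x, y), (y, x)}"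
  by (auto simp: darts_def doubleton_eq_iff)

section \<open>Rotation systems and their faces\<close>

lemma face_of_self: "d \<in> face_of \<sigma> d"
  unfolding face_of_def by (auto intro: exI[of _ 0])

lemma face_perm_in_face_of: "e \<in> face_of \<sigma> d \<Longrightarrow> face_perm \<sigma> e \<in> face_of \<sigma> d"
  unfolding face_of_def by (auto intro: exI[of _ "Suc n" for n])

lemma face_of_range: "face_of \<sigma> d = range (\<lambda>n. (face_perm \<sigma> ^^ n) d)"
  by (auto simp: face_of_def)

lemma face_perm_bij_betw:
  assumes "bij_betw \<sigma> (darts E) (darts E)"
  shows "bij_betw (face_perm \<sigma>) (darts E) (darts E)"
proof -
  have "bij_betw prod.swap (darts E) (darts E)"
    by (rule bij_betwI[of _ _ _ prod.swap]) (auto intro: darts_swap)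
  then have "bij_betw (\<sigma> \<circ> prod.swap) (darts E) (darts E)"
    using assms by (rule bij_betw_trans)
  then show ?thesis
    by (simp add: face_perm_def comp_def prod.swap_def cong: bij_betw_cong)
qed

definition euler_count :: "'a set \<Rightarrow> 'a set set \<Rightarrow> ('a \<times> 'a \<Rightarrow> 'a \<times> 'a) \<Rightarrow> int" where
  "euler_count C E \<sigma> = int (card C) - int (card {e \<in> E. e \<subseteq> C})
     + int (card {f \<in> faces E \<sigma>. \<exists>d\<in>f. fst d \<in> C})"

lemma planar_rotation_system_iff:
  "planar_rotation_system V E \<sigma> \<longleftrightarrow> rotation_system V E \<sigma> \<and>
     (\<forall>v\<in>V. {e \<in> E. e \<subseteq> component V E v} \<noteq> {} \<longrightarrow> euler_count (component V E v) E \<sigma> = 2)"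
  unfolding planar_rotation_system_def euler_count_def Let_def ..

context
  fixes V E \<sigma>
  assumes graph: "simple_graph V E" and rot: "rotation_system V E \<sigma>"
begin

lemma rotation_bij_betw: "bij_betw \<sigma> (darts E) (darts E)"
  using rot by (simp add: rotation_system_def)

lemma rotation_in_darts: "d \<in> darts E \<Longrightarrow> \<sigma> d \<in> darts E"
  using rotation_bij_betw by (rule bij_betw_apply)

lemma rotation_fst: "d \<in> darts E \<Longrightarrow> fst (\<sigma> d) = fst d"
  using rot by (simp add: rotation_system_def)

lemma rotation_transitive: "d \<in> darts E \<Longrightarrow> e \<in> darts E \<Longrightarrow> fst d = fst e \<Longrightarrow> \<exists>n. (\<sigma> ^^ n) d = e"
  using rot unfolding rotation_system_def by blast

lemma face_perm_in_darts: "d \<in> darts E \<Longrightarrow> face_perm \<sigma> d \<in> darts E"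
  using face_perm_bij_betw[OF rotation_bij_betw] by (rule bij_betw_apply)

lemma fst_face_perm: "d \<in> darts E \<Longrightarrow> fst (face_perm \<sigma> d) = snd d"
  by (cases d) (simp add: face_perm_def rotation_fst darts_swap)

lemma face_of_eq_orbit:
  assumes "d \<in> darts E"
  shows "d \<in> orbit (face_perm \<sigma>) d" "face_of \<sigma> d = orbit (face_perm \<sigma>) d"
proof -
  show self: "d \<in> orbit (face_perm \<sigma>) d"
    using finite_darts[OF graph] face_perm_bij_betw[OF rotation_bij_betw] assms
    by (rule self_in_orbit_if_bij_betw)
  show "face_of \<sigma> d = orbit (face_perm \<sigma>) d"
    unfolding face_of_def orbit_altdef_self_in[OF self] ..
qed

lemma face_of_subset_darts: "d \<in> darts E \<Longrightarrow> face_of \<sigma> d \<subseteq> darts E"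
proof
  fix e assume d: "d \<in> darts E" and "e \<in> face_of \<sigma> d"
  then obtain n where "e = (face_perm \<sigma> ^^ n) d" by (auto simp: face_of_def)
  then show "e \<in> darts E"
    using funpow_closed[of "darts E" "face_perm \<sigma>" d n] face_perm_in_darts d by blast
qed

lemma face_of_eq_if_mem:
  assumes "d \<in> darts E" "e \<in> face_of \<sigma> d"
  shows "face_of \<sigma> e = face_of \<sigma> d"
proof -
  have "e \<in> darts E" using face_of_subset_darts assms by blast
  then have "face_of \<sigma> e = orbit (face_perm \<sigma>) e" by (rule face_of_eq_orbit)
  also have "\<dots> = orbit (face_perm \<sigma>) d"
    using face_of_eq_orbit[OF assms(1)] assms(2) by (intro orbit_eq_if_in_orbit) simp_all
  also have "\<dots> = face_of \<sigma> d" using face_of_eq_orbit[OF assms(1)] by simp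
  finally show ?thesis .
qed

lemma face_of_face_perm: "d \<in> darts E \<Longrightarrow> face_of \<sigma> (face_perm \<sigma> d) = face_of \<sigma> d"
  by (rule face_of_eq_if_mem) (auto simp: face_of_def intro: exI[of _ 1])

lemma face_of_rotation_swap: "(x, y) \<in> darts E \<Longrightarrow> face_of \<sigma> (\<sigma> (x, y)) = face_of \<sigma> (y, x)"
  using face_of_face_perm[of "(y, x)"] by (simp add: face_perm_def darts_swap)

lemma orbit_rotation_eq_darts_at:
  assumes "(v, x) \<in> darts E"
  shows "(v, x) \<in> orbit \<sigma> (v, x)" "orbit \<sigma> (v, x) = {d \<in> darts E. fst d = v}"
proof -
  show self: "(v, x) \<in> orbit \<sigma> (v, x)"
    using finite_darts[OF graph] rotation_bij_betw assms by (rule self_in_orbit_if_bij_betw)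
  let ?A = "{d \<in> darts E. fst d = v}"
  have closed: "\<sigma> d \<in> ?A" if "d \<in> ?A" for d
    using that rotation_in_darts rotation_fst by blast
  have "(v, x) \<in> ?A" using assms by simp
  then have in_A: "(\<sigma> ^^ n) (v, x) \<in> ?A" for n
    using closed by (rule funpow_closed[rotated])
  have reach: "\<exists>n. d = (\<sigma> ^^ n) (v, x)" if "d \<in> ?A" for d
  proof -
    have "d \<in> darts E" "fst (v, x) = fst d" using that by simp_all
    then show ?thesis using rotation_transitive[OF assms] by metis
  qed
  show "orbit \<sigma> (v, x) = ?A"
    unfolding orbit_altdef_self_in[OF self] using in_A reach by auto
qed

lemma degree_3_rotation:
  assumes "degree E v = 3" "(v, x) \<in> darts E"
  shows "{d \<in> darts E. fst d = v} = {(v, x), \<sigma> (v, x), \<sigma> (\<sigma> (v, x))}"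
    and "distinct [(v, x), \<sigma> (v, x), \<sigma> (\<sigma> (v, x))]"
    and "\<sigma> (\<sigma> (\<sigma> (v, x))) = (v, x)"
proof -
  have card: "card (orbit \<sigma> (v, x)) = 3"
    using orbit_rotation_eq_darts_at(2)[OF assms(2)] card_darts_at[of E v] assms(1) by simp
  show "{d \<in> darts E. fst d = v} = {(v, x), \<sigma> (v, x), \<sigma> (\<sigma> (v, x))}"
    using orbit_card_3(1)[OF orbit_rotation_eq_darts_at(1)[OF assms(2)] card]
      orbit_rotation_eq_darts_at(2)[OF assms(2)] by simp
  show "distinct [(v, x), \<sigma> (v, x), \<sigma> (\<sigma> (v, x))]" "\<sigma> (\<sigma> (\<sigma> (v, x))) = (v, x)"
    using orbit_card_3(2,3)[OF orbit_rotation_eq_darts_at(1)[OF assms(2)] card] by simp_all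
qed

lemma incident_face_dart:
  assumes "f \<in> faces E \<sigma>" "incident_face v f"
  obtains p where "(v, p) \<in> darts E" "face_of \<sigma> (v, p) = f"
proof -
  obtain d where d: "d \<in> darts E" "f = face_of \<sigma> d" using assms(1) by (auto simp: faces_def)
  obtain e where e: "e \<in> f" "fst e = v" using assms(2) by (auto simp: incident_face_def)
  have "e \<in> darts E" using face_of_subset_darts d e by blast
  moreover have "face_of \<sigma> e = f" using face_of_eq_if_mem d e by blast
  ultimately show ?thesis using that e(2) by (cases e) simp
qed

lemma degree_3_edge_between_faces:
  assumes "degree E v = 3" "f1 \<in> faces E \<sigma>" "f2 \<in> faces E \<sigma>" "f1 \<noteq> f2"
    and "incident_face v f1" "incident_face v f2"
  shows "\<exists>u. (v, u) \<in> darts E \<and> {face_of \<sigma> (v, u), face_of \<sigma> (u, v)} = {f1, f2}"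
proof -
  obtain p where p: "(v, p) \<in> darts E" "face_of \<sigma> (v, p) = f1"
    using incident_face_dart assms(2,5) by blast
  obtain q where q: "(v, q) \<in> darts E" "face_of \<sigma> (v, q) = f2"
    using incident_face_dart assms(3,6) by blast
  have "(v, q) \<in> {d \<in> darts E. fst d = v}" using q(1) by simp
  then have "(v, q) \<in> {(v, p), \<sigma> (v, p), \<sigma> (\<sigma> (v, p))}"
    by (simp only: degree_3_rotation(1)[OF assms(1) p(1)])
  moreover have "(v, q) \<noteq> (v, p)" using p(2) q(2) assms(4) by auto
  ultimately consider "\<sigma> (v, p) = (v, q)" | "\<sigma> (\<sigma> (v, p)) = (v, q)" by auto
  then show ?thesis
  proof cases
    case 1
    then have "face_of \<sigma> (p, v) = f2"
      using face_of_rotation_swap[OF p(1)] q(2) by simp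
    then show ?thesis using p by (intro exI[of _ p]) auto
  next
    case 2
    then have "\<sigma> (v, q) = (v, p)" using degree_3_rotation(3)[OF assms(1) p(1)] by simp
    then have "face_of \<sigma> (q, v) = f1"
      using face_of_rotation_swap[OF q(1)] p(2) by simp
    then show ?thesis using q by (intro exI[of _ q]) auto
  qed
qed

lemma reach_face:
  assumes "d \<in> darts E" "e \<in> face_of \<sigma> d"
  shows "reach V E (fst d) (fst e)"
proof -
  have "reach V E (fst d) (fst ((face_perm \<sigma> ^^ n) d))" for n
  proof (induction n)
    case (Suc n)
    let ?d = "(face_perm \<sigma> ^^ n) d"
    have "?d \<in> darts E"
      using face_perm_in_darts assms(1) by (rule funpow_closed)
    then have "reach V E (fst ?d) (snd ?d)"
      using reach_dart[OF graph] by (metis prod.collapse)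
    then show ?case
      using Suc.IH fst_face_perm[OF \<open>?d \<in> darts E\<close>] by (auto intro: reach_trans)
  qed (simp add: reach_refl)
  then show ?thesis using assms(2) by (auto simp: face_of_def)
qed

end

section \<open>Distance-2 colourings\<close>

lemma chi2_le: "dist2_coloring V E c k \<Longrightarrow> chi2 V E \<le> k"
  unfolding chi2_def by (rule Least_le) blast

lemma dist2_coloring_mono: "dist2_coloring V E c k \<Longrightarrow> k \<le> l \<Longrightarrow> dist2_coloring V E c l"
  unfolding dist2_coloring_def by auto

lemma dist2_coloring_if_chi2_le:
  assumes "finite V" "chi2 V E \<le> k"
  shows "\<exists>c. dist2_coloring V E c k"
proof -
  obtain f :: "'a \<Rightarrow> nat" and n where f: "inj_on f V" "f ` V = {i. i < n}"
    using finite_imp_inj_to_nat_seg[OF assms(1)] by blast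
  have "dist2_coloring V E f n"
    unfolding dist2_coloring_def
  proof (intro conjI ballI impI)
    fix x assume "x \<in> V"
    then show "f x < n" using f(2) by blast
  next
    fix x y assume "x \<in> V" "y \<in> V" "x \<noteq> y \<and> dist_le2 V E x y"
    then show "f x \<noteq> f y" using f(1) by (auto dest: inj_onD)
  qed
  then have "\<exists>k c. dist2_coloring V E c k" by blast
  then have "\<exists>c. dist2_coloring V E c (chi2 V E)"
    unfolding chi2_def by (rule LeastI_ex[of "\<lambda>k. \<exists>c. dist2_coloring V E c k"])
  then show ?thesis using dist2_coloring_mono assms(2) by blast
qed

lemma dist2_ball_subset:
  "{x \<in> V. x \<noteq> v \<and> dist_le2 V E v x} \<subseteq> neighbors E v \<union> (\<Union>y\<in>neighbors E v. neighbors E y - {v})"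
  by (auto simp: dist_le2_def adj_iff_dart neighbors_iff_dart intro: darts_swap)

lemma dist_le2_commute: "dist_le2 V E x y \<longleftrightarrow> dist_le2 V E y x"
  unfolding dist_le2_def adj_def by (auto simp: insert_commute)

lemma dist2_coloring_extend:
  assumes col: "dist2_coloring V E' c k"
    and kept: "\<And>x y. x \<in> V \<Longrightarrow> y \<in> V \<Longrightarrow> x \<noteq> v \<Longrightarrow> y \<noteq> v \<Longrightarrow> x \<noteq> y \<Longrightarrow>
      dist_le2 V E x y \<Longrightarrow> dist_le2 V E' x y"
    and "finite V" and few: "card {x \<in> V. x \<noteq> v \<and> dist_le2 V E v x} < k"
  shows "\<exists>c'. dist2_coloring V E c' k"
proof -
  let ?S = "{x \<in> V. x \<noteq> v \<and> dist_le2 V E v x}"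
  have "finite (c ` ?S)" using \<open>finite V\<close> by simp
  moreover have "card (c ` ?S) < card {..<k}"
    using few card_image_le[of ?S c] \<open>finite V\<close> by simp
  ultimately have "\<not> {..<k} \<subseteq> c ` ?S"
    using card_mono leD by blast
  then obtain i where i: "i < k" "i \<notin> c ` ?S" by blast
  have "dist2_coloring V E (c(v := i)) k"
    unfolding dist2_coloring_def
  proof (intro conjI ballI impI)
    fix x assume "x \<in> V"
    then show "(c(v := i)) x < k" using col i(1) by (simp add: dist2_coloring_def)
  next
    fix x y assume xy: "x \<in> V" "y \<in> V" "x \<noteq> y \<and> dist_le2 V E x y"
    consider "x = v" | "y = v" | "x \<noteq> v" "y \<noteq> v" by blast
    then show "(c(v := i)) x \<noteq> (c(v := i)) y"
    proof cases
      case 1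
      then have "y \<in> ?S" using xy by auto
      then show ?thesis using 1 xy i(2) by auto
    next
      case 2
      then have "x \<in> ?S" using xy dist_le2_commute[of V E x v] by auto
      then show ?thesis using 2 xy i(2) by auto
    next
      case 3
      then have "dist_le2 V E' x y" using xy kept by blast
      then show ?thesis using 3 xy col by (simp add: dist2_coloring_def)
    qed
  qed
  then show ?thesis by blast
qed

section \<open>Renaming the vertices\<close>

lemma doubleton_in_image_edges: "{x, y} \<in> E \<Longrightarrow> {f x, f y} \<in> image f ` E"
  using image_eqI[of "{f x, f y}" "image f" "{x, y}" E] by simp

locale graph_renaming =
  fixes V :: "'a set" and E :: "'a set set" and f :: "'a \<Rightarrow> 'b"
  assumes graph: "simple_graph V E" and inj: "inj_on f V"
begin

abbreviation "map_dart \<equiv> map_prod f f"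

lemma edge_image_iff: "x \<in> V \<Longrightarrow> y \<in> V \<Longrightarrow> {f x, f y} \<in> image f ` E \<longleftrightarrow> {x, y} \<in> E"
proof
  assume xy: "x \<in> V" "y \<in> V" and "{f x, f y} \<in> image f ` E"
  then obtain e where e: "e \<in> E" "{f x, f y} = f ` e" by blast
  have "f ` {x, y} = f ` e" using e(2) by simp
  then have "{x, y} = e"
    using inj_on_image_eq_iff[OF inj] edge_subset_vertices[OF graph e(1)] xy by blast
  then show "{x, y} \<in> E" using e(1) by simp
qed (rule doubleton_in_image_edges)

lemma darts_image: "darts (image f ` E) = map_dart ` darts E"
proof (intro equalityI subsetI)
  fix d assume "d \<in> darts (image f ` E)"
  then obtain e where e: "e \<in> E" "{fst d, snd d} = f ` e" by (auto simp: darts_def)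
  then obtain x y where "e = {x, y}" "x \<in> V" "y \<in> V"
    using graph by (auto simp: simple_graph_def)
  moreover from this e have "d = map_dart (x, y) \<or> d = map_dart (y, x)" by (cases d) (auto simp: doubleton_eq_iff)
  ultimately show "d \<in> map_dart ` darts E" using e(1) by (auto simp: darts_def insert_commute)
next
  fix d assume "d \<in> map_dart ` darts E"
  then obtain x y where "d = (f x, f y)" "{x, y} \<in> E" by (auto simp: darts_def)
  then show "d \<in> darts (image f ` E)" by (simp add: darts_def doubleton_in_image_edges)
qed

lemma inj_on_darts: "inj_on map_dart (darts E)"
  using inj dart_endpoints[OF graph] by (auto simp: inj_on_def)

lemma simple_graph_image: "simple_graph (f ` V) (image f ` E)"
  using graph inj unfolding simple_graph_def by (fastforce simp: inj_on_def)

lemma degree_image: "x \<in> V \<Longrightarrow> degree (image f ` E) (f x) = degree E x"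
proof -
  assume "x \<in> V"
  then have "{d \<in> darts (image f ` E). fst d = f x} = map_dart ` {d \<in> darts E. fst d = x}"
    unfolding darts_image using inj dart_endpoints[OF graph] by (auto simp: inj_on_def)
  moreover have "inj_on map_dart {d \<in> darts E. fst d = x}"
    using inj_on_darts by (rule inj_on_subset) blast
  ultimately show ?thesis by (simp add: card_darts_at[symmetric] card_image)
qed

lemma adj_image: "adj E x y \<Longrightarrow> adj (image f ` E) (f x) (f y)"
  unfolding adj_def by (rule doubleton_in_image_edges)

lemma reach_image_iff:
  assumes "x \<in> V" "y \<in> V"
  shows "reach (f ` V) (image f ` E) (f x) (f y) \<longleftrightarrow> reach V E x y"
proof
  have "\<exists>z\<in>V. z' = f z \<and> reach V E x z" if "reach (f ` V) (image f ` E) (f x) z'" for z'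
    using that unfolding reach_def
  proof (induction rule: rtranclp_induct)
    case base then show ?case using assms(1) by blast
  next
    case (step z' w')
    then obtain z w where zw: "z \<in> V" "z' = f z" "(\<lambda>u v. u \<in> V \<and> v \<in> V \<and> adj E u v)\<^sup>*\<^sup>* x z"
      "w \<in> V" "w' = f w" by blast
    then have "adj E z w" using step(2) edge_image_iff by (simp add: adj_def)
    then show ?case using zw by (intro bexI[of _ w]) (auto intro: rtranclp.rtrancl_into_rtrancl)
  qed
  moreover assume "reach (f ` V) (image f ` E) (f x) (f y)"
  ultimately obtain z where "z \<in> V" "f y = f z" "reach V E x z" by blast
  then show "reach V E x y" using inj assms(2) by (metis inj_onD)
next
  assume "reach V E x y"
  then show "reach (f ` V) (image f ` E) (f x) (f y)" unfolding reach_def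
    by (induction rule: rtranclp_induct) (auto intro: rtranclp.rtrancl_into_rtrancl adj_image)
qed

lemma component_image: "x \<in> V \<Longrightarrow> component (f ` V) (image f ` E) (f x) = f ` component V E x"
  unfolding component_def using reach_image_iff by auto

lemma dist2_coloring_pullback:
  "dist2_coloring (f ` V) (image f ` E) c k \<Longrightarrow> dist2_coloring V E (c \<circ> f) k"
  unfolding dist2_coloring_def dist_le2_def using inj adj_image by (simp add: inj_on_def) blast

lemma card_edges_image: "card (image f ` E) = card E"
  using edge_subset_vertices[OF graph]
  by (intro card_image inj_on_subset[OF inj_on_image_Pow[OF inj]]) blast

lemma dist2_coloring_if_chi2_image_le:
  assumes "chi2 (f ` V) (image f ` E) \<le> k"
  shows "\<exists>c. dist2_coloring V E c k"
proof -
  have "finite (f ` V)" using graph by (simp add: simple_graph_def)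
  then obtain c where "dist2_coloring (f ` V) (image f ` E) c k"
    using dist2_coloring_if_chi2_le assms by blast
  then show ?thesis using dist2_coloring_pullback by blast
qed

definition renamed_rotation :: "('a \<times> 'a \<Rightarrow> 'a \<times> 'a) \<Rightarrow> 'b \<times> 'b \<Rightarrow> 'b \<times> 'b" where
  "renamed_rotation \<sigma> = map_dart \<circ> \<sigma> \<circ> inv_into (darts E) map_dart"

lemma renamed_rotation_apply: "d \<in> darts E \<Longrightarrow> renamed_rotation \<sigma> (map_dart d) = map_dart (\<sigma> d)"
  using inj_on_darts by (simp add: renamed_rotation_def)

context
  fixes \<sigma> assumes rot: "rotation_system V E \<sigma>"
begin

lemma rotation_system_image: "rotation_system (f ` V) (image f ` E) (renamed_rotation \<sigma>)"
  unfolding rotation_system_def darts_image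
proof (intro conjI ballI impI)
  have "bij_betw (inv_into (darts E) map_dart) (map_dart ` darts E) (darts E)"
    by (rule bij_betw_inv_into[OF inj_on_imp_bij_betw[OF inj_on_darts]])
  then have "bij_betw (\<sigma> \<circ> inv_into (darts E) map_dart) (map_dart ` darts E) (darts E)"
    using rotation_bij_betw[OF graph rot] by (rule bij_betw_trans)
  then have "bij_betw (map_dart \<circ> (\<sigma> \<circ> inv_into (darts E) map_dart)) (map_dart ` darts E) (map_dart ` darts E)"
    using inj_on_imp_bij_betw[OF inj_on_darts] by (rule bij_betw_trans)
  then show "bij_betw (renamed_rotation \<sigma>) (map_dart ` darts E) (map_dart ` darts E)"
    by (simp add: renamed_rotation_def comp_assoc)
next
  fix d' assume "d' \<in> map_dart ` darts E"
  then obtain d where "d' = map_dart d" "d \<in> darts E" by (rule imageE)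
  then show "fst (renamed_rotation \<sigma> d') = fst d'"
    using renamed_rotation_apply rotation_fst[OF graph rot] by (simp add: fst_map_prod)
next
  fix d' e' assume "d' \<in> map_dart ` darts E" "e' \<in> map_dart ` darts E" "fst d' = fst e'"
  then obtain d e where de: "d' = map_dart d" "d \<in> darts E" "e' = map_dart e" "e \<in> darts E"
    by (meson imageE)
  have "fst d \<in> V" "fst e \<in> V"
    using de(2,4) dart_endpoints(1)[OF graph] by (metis prod.collapse)+
  moreover have "f (fst d) = f (fst e)" using de(1,3) \<open>fst d' = fst e'\<close> by simp
  ultimately have "fst d = fst e" using inj_onD[OF inj] by blast
  then obtain n where "(\<sigma> ^^ n) d = e" using rotation_transitive[OF graph rot de(2,4)] by blast
  moreover have "(renamed_rotation \<sigma> ^^ n) (map_dart d) = map_dart ((\<sigma> ^^ n) d)"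
    using rotation_in_darts[OF graph rot] renamed_rotation_apply de(2) by (rule funpow_commute_on)
  ultimately show "\<exists>n. (renamed_rotation \<sigma> ^^ n) d' = e'" using de by blast
qed

lemma face_of_image: "d \<in> darts E \<Longrightarrow> face_of (renamed_rotation \<sigma>) (map_dart d) = map_dart ` face_of \<sigma> d"
proof -
  have "face_perm (renamed_rotation \<sigma>) (map_dart d) = map_dart (face_perm \<sigma> d)" if "d \<in> darts E" for d
    using renamed_rotation_apply[OF darts_swap[of "fst d" "snd d"]] that
    by (simp add: face_perm_def)
  moreover assume "d \<in> darts E"
  ultimately have "(face_perm (renamed_rotation \<sigma>) ^^ n) (map_dart d) = map_dart ((face_perm \<sigma> ^^ n) d)" for n
    using face_perm_in_darts[OF graph rot] by (intro funpow_commute_on)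
  then show ?thesis unfolding face_of_range image_image by simp
qed

lemma faces_image: "faces (image f ` E) (renamed_rotation \<sigma>) = image map_dart ` faces E \<sigma>"
  unfolding faces_def darts_image image_image using face_of_image by simp

lemma edges_within_image:
  assumes "C \<subseteq> V"
  shows "{e \<in> image f ` E. e \<subseteq> f ` C} = image f ` {e \<in> E. e \<subseteq> C}"
proof -
  have "f ` e \<subseteq> f ` C \<longleftrightarrow> e \<subseteq> C" if "e \<in> E" for e
    using inj_on_image_mem_iff[OF inj _ assms] edge_subset_vertices[OF graph that]
    by (fastforce simp: image_subset_iff)
  then show ?thesis by blast
qed

lemma faces_meeting_image:
  assumes "C \<subseteq> V"
  shows "{F \<in> faces (image f ` E) (renamed_rotation \<sigma>). \<exists>d\<in>F. fst d \<in> f ` C}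
    = image map_dart ` {F \<in> faces E \<sigma>. \<exists>d\<in>F. fst d \<in> C}"
proof -
  have "(\<exists>d\<in>map_dart ` F. fst d \<in> f ` C) \<longleftrightarrow> (\<exists>d\<in>F. fst d \<in> C)" if "F \<in> faces E \<sigma>" for F
  proof -
    have "fst d \<in> V" if "d \<in> F" for d
      using \<open>F \<in> faces E \<sigma>\<close> that face_of_subset_darts[OF graph rot] dart_endpoints(1)[OF graph]
      by (metis faces_def imageE prod.collapse subsetD)
    then show ?thesis using inj_on_image_mem_iff[OF inj _ assms] by auto
  qed
  then show ?thesis unfolding faces_image by blast
qed

lemma euler_count_image:
  assumes "C \<subseteq> V"
  shows "euler_count (f ` C) (image f ` E) (renamed_rotation \<sigma>) = euler_count C E \<sigma>"
proof -
  have "card (f ` C) = card C"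
    using inj_on_subset[OF inj assms] by (rule card_image)
  moreover have "{e \<in> E. e \<subseteq> C} \<subseteq> Pow V"
    using edge_subset_vertices[OF graph] by blast
  then have "card (image f ` {e \<in> E. e \<subseteq> C}) = card {e \<in> E. e \<subseteq> C}"
    by (intro card_image inj_on_subset[OF inj_on_image_Pow[OF inj]])
  moreover have "{F \<in> faces E \<sigma>. \<exists>d\<in>F. fst d \<in> C} \<subseteq> Pow (darts E)"
    using face_of_subset_darts[OF graph rot] by (auto simp: faces_def)
  then have "card (image map_dart ` {F \<in> faces E \<sigma>. \<exists>d\<in>F. fst d \<in> C}) =
      card {F \<in> faces E \<sigma>. \<exists>d\<in>F. fst d \<in> C}"
    by (intro card_image inj_on_subset[OF inj_on_image_Pow[OF inj_on_darts]])
  ultimately show ?thesis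
    unfolding euler_count_def edges_within_image[OF assms] faces_meeting_image[OF assms] by simp
qed

lemma planar_rotation_system_image:
  assumes "planar_rotation_system V E \<sigma>"
  shows "planar_rotation_system (f ` V) (image f ` E) (renamed_rotation \<sigma>)"
  unfolding planar_rotation_system_iff
proof (intro conjI rotation_system_image ballI impI)
  fix v' assume "v' \<in> f ` V"
  then obtain v where v: "v' = f v" "v \<in> V" by blast
  let ?C = "component V E v"
  have C: "?C \<subseteq> V" by (auto simp: component_def)
  assume "{e \<in> image f ` E. e \<subseteq> component (f ` V) (image f ` E) v'} \<noteq> {}"
  then have "{e \<in> E. e \<subseteq> ?C} \<noteq> {}"
    unfolding v component_image[OF v(2)] edges_within_image[OF C] by simp
  then have "euler_count ?C E \<sigma> = 2"
    using assms v(2) by (simp add: planar_rotation_system_iff)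
  then show "euler_count (component (f ` V) (image f ` E) v') (image f ` E) (renamed_rotation \<sigma>) = 2"
    unfolding v component_image[OF v(2)] euler_count_image[OF C] .
qed

end

end

lemma class_F_image:
  assumes "class_F V E" "inj_on f V"
  shows "class_F (f ` V) (image f ` E)"
proof -
  interpret graph_renaming V E f
    using assms by unfold_locales (simp_all add: class_F_def)
  obtain \<sigma> where "planar_rotation_system V E \<sigma>"
    using assms(1) by (auto simp: class_F_def planar_def)
  then have "planar_rotation_system (f ` V) (image f ` E) (renamed_rotation \<sigma>)"
    by (intro planar_rotation_system_image) (simp_all add: planar_rotation_system_def)
  then have "planar (f ` V) (image f ` E)"
    unfolding planar_def by blast
  moreover have "max_degree_le (f ` V) (image f ` E) 4"
    using assms(1) degree_image by (auto simp: class_F_def max_degree_le_def)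
  ultimately show ?thesis using simple_graph_image by (simp add: class_F_def)
qed

section \<open>Deleting an edge\<close>

definition skip_edge :: "'a \<Rightarrow> 'a \<Rightarrow> ('a \<times> 'a \<Rightarrow> 'a \<times> 'a) \<Rightarrow> 'a \<times> 'a \<Rightarrow> 'a \<times> 'a" where
  "skip_edge x y \<sigma> d = (if \<sigma> d \<in> {(x, y), (y, x)} then \<sigma> (\<sigma> d) else \<sigma> d)"

lemma face_perm_skip_edge:
  "face_perm (skip_edge x y \<sigma>) d =
    (if face_perm \<sigma> d \<in> {(x, y), (y, x)} then \<sigma> (face_perm \<sigma> d) else face_perm \<sigma> d)"
  by (simp add: face_perm_def skip_edge_def)

lemma face_of_skip_edge:
  assumes "(x, y) \<notin> face_of \<sigma> d" "(y, x) \<notin> face_of \<sigma> d"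
  shows "face_of (skip_edge x y \<sigma>) d = face_of \<sigma> d"
proof -
  have "(face_perm (skip_edge x y \<sigma>) ^^ n) d = (face_perm \<sigma> ^^ n) d" for n
  proof (induction n)
    case (Suc n)
    have "(face_perm \<sigma> ^^ n) d \<in> face_of \<sigma> d" by (auto simp: face_of_def)
    then have "face_perm \<sigma> ((face_perm \<sigma> ^^ n) d) \<in> face_of \<sigma> d"
      by (rule face_perm_in_face_of)
    then have "face_perm (skip_edge x y \<sigma>) ((face_perm \<sigma> ^^ n) d) = face_perm \<sigma> ((face_perm \<sigma> ^^ n) d)"
      using assms by (auto simp: face_perm_skip_edge)
    then show ?case using Suc.IH by simp
  qed simp
  then show ?thesis by (simp add: face_of_def)
qed

context
  fixes V E \<sigma> x y
  assumes graph: "simple_graph V E" and rot: "rotation_system V E \<sigma>"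
    and xy: "(x, y) \<in> darts E" and not_leaf: "\<sigma> (x, y) \<noteq> (x, y)" "\<sigma> (y, x) \<noteq> (y, x)"
begin

lemma rotation_skips_deleted: "d \<in> {(x, y), (y, x)} \<Longrightarrow> \<sigma> d \<in> darts E - {(x, y), (y, x)}"
proof -
  assume d: "d \<in> {(x, y), (y, x)}"
  have yx: "(y, x) \<in> darts E" using xy by (rule darts_swap)
  have "x \<noteq> y" using dart_endpoints(3)[OF graph xy] .
  then show ?thesis
    using d not_leaf rotation_in_darts[OF graph rot] rotation_fst[OF graph rot] xy yx
    by (metis (no_types, lifting) DiffI empty_iff fst_conv insert_iff)
qed

lemma skip_edge_in_darts:
  "d \<in> darts E - {(x, y), (y, x)} \<Longrightarrow> skip_edge x y \<sigma> d \<in> darts E - {(x, y), (y, x)}"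
  using rotation_skips_deleted rotation_in_darts[OF graph rot] by (auto simp: skip_edge_def)

lemma inj_on_skip_edge: "inj_on (skip_edge x y \<sigma>) (darts E - {(x, y), (y, x)})"
proof (rule inj_onI)
  fix d e assume d: "d \<in> darts E - {(x, y), (y, x)}" and e: "e \<in> darts E - {(x, y), (y, x)}"
    and eq: "skip_edge x y \<sigma> d = skip_edge x y \<sigma> e"
  have inj: "p = q" if "p \<in> darts E" "q \<in> darts E" "\<sigma> p = \<sigma> q" for p q
    using rotation_bij_betw[OF graph rot] that by (auto simp: bij_betw_def dest: inj_onD)
  have "\<sigma> d \<in> darts E" "\<sigma> e \<in> darts E" using d e rotation_in_darts[OF graph rot] by auto
  then show "d = e"
    using d e eq inj[of d e] inj[of "\<sigma> d" e] inj[of d "\<sigma> e"] inj[of "\<sigma> d" "\<sigma> e"]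
    by (auto simp: skip_edge_def split: if_splits)
qed

lemma skip_edge_funpow:
  assumes "d \<in> darts E - {(x, y), (y, x)}"
  shows "\<exists>m. (skip_edge x y \<sigma> ^^ m) d =
    (if (\<sigma> ^^ n) d \<in> {(x, y), (y, x)} then \<sigma> ((\<sigma> ^^ n) d) else (\<sigma> ^^ n) d)"
proof (induction n)
  case 0
  then show ?case using assms by (intro exI[of _ 0]) auto
next
  case (Suc n)
  then obtain m where m: "(skip_edge x y \<sigma> ^^ m) d =
    (if (\<sigma> ^^ n) d \<in> {(x, y), (y, x)} then \<sigma> ((\<sigma> ^^ n) d) else (\<sigma> ^^ n) d)" by blast
  show ?case
  proof (cases "(\<sigma> ^^ n) d \<in> {(x, y), (y, x)}")
    case True
    then have "\<sigma> ((\<sigma> ^^ n) d) \<notin> {(x, y), (y, x)}" using rotation_skips_deleted by blast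
    then show ?thesis using m True by (intro exI[of _ m]) simp
  next
    case False
    then have "(skip_edge x y \<sigma> ^^ Suc m) d = skip_edge x y \<sigma> ((\<sigma> ^^ n) d)" using m by simp
    also have "\<dots> = (if (\<sigma> ^^ Suc n) d \<in> {(x, y), (y, x)} then \<sigma> ((\<sigma> ^^ Suc n) d)
        else (\<sigma> ^^ Suc n) d)"
      by (simp add: skip_edge_def)
    finally show ?thesis by blast
  qed
qed

lemma rotation_system_delete_edge: "rotation_system V (E - {{x, y}}) (skip_edge x y \<sigma>)"
  unfolding rotation_system_def darts_delete_edge
proof (intro conjI ballI impI)
  have "finite (darts E - {(x, y), (y, x)})" using finite_darts[OF graph] by simp
  moreover have "skip_edge x y \<sigma> ` (darts E - {(x, y), (y, x)}) \<subseteq> darts E - {(x, y), (y, x)}"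
    using skip_edge_in_darts by (rule image_subsetI)
  ultimately have "skip_edge x y \<sigma> ` (darts E - {(x, y), (y, x)}) = darts E - {(x, y), (y, x)}"
    using inj_on_skip_edge by (rule endo_inj_surj)
  then show "bij_betw (skip_edge x y \<sigma>) (darts E - {(x, y), (y, x)}) (darts E - {(x, y), (y, x)})"
    using inj_on_skip_edge by (simp add: bij_betw_def)
next
  fix d assume "d \<in> darts E - {(x, y), (y, x)}"
  then show "fst (skip_edge x y \<sigma> d) = fst d"
    using rotation_fst[OF graph rot] rotation_in_darts[OF graph rot] by (simp add: skip_edge_def)
next
  fix d e assume d: "d \<in> darts E - {(x, y), (y, x)}" and e: "e \<in> darts E - {(x, y), (y, x)}"
    and "fst d = fst e"
  then obtain n where "(\<sigma> ^^ n) d = e" using rotation_transitive[OF graph rot] by blast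
  then show "\<exists>m. (skip_edge x y \<sigma> ^^ m) d = e" using skip_edge_funpow[OF d, of n] e by auto
qed

end

section \<open>Two quadrangles sharing an edge\<close>

locale quadrangle_pair =
  fixes V :: "'a set" and E :: "'a set set" and \<sigma> :: "'a \<times> 'a \<Rightarrow> 'a \<times> 'a" and v u :: 'a
  assumes graph: "simple_graph V E" and planar: "planar_rotation_system V E \<sigma>"
    and edge: "(v, u) \<in> darts E"
    and card_left: "card (face_of \<sigma> (v, u)) = 4" and card_right: "card (face_of \<sigma> (u, v)) = 4"
    and distinct_faces: "face_of \<sigma> (v, u) \<noteq> face_of \<sigma> (u, v)"
begin

abbreviation "\<phi> \<equiv> face_perm \<sigma>"
abbreviation "a \<equiv> (v, u)"
abbreviation "b \<equiv> (u, v)"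
abbreviation "Fa \<equiv> face_of \<sigma> a"
abbreviation "Fb \<equiv> face_of \<sigma> b"

definition "w1 = snd (\<phi> a)"
definition "w2 = snd (\<phi> (\<phi> a))"
definition "z1 = snd (\<phi> b)"
definition "z2 = snd (\<phi> (\<phi> b))"

lemma rot: "rotation_system V E \<sigma>"
  using planar by (simp add: planar_rotation_system_def)

lemma edge': "b \<in> darts E"
  using edge by (rule darts_swap)

lemma quadrangle:
  assumes "d \<in> darts E" "card (face_of \<sigma> d) = 4"
  shows "face_of \<sigma> d = {d, \<phi> d, \<phi> (\<phi> d), \<phi> (\<phi> (\<phi> d))}"
    "distinct [d, \<phi> d, \<phi> (\<phi> d), \<phi> (\<phi> (\<phi> d))]" "\<phi> (\<phi> (\<phi> (\<phi> d))) = d"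
proof -
  note self = face_of_eq_orbit(1)[OF graph rot assms(1)]
  note eq = face_of_eq_orbit(2)[OF graph rot assms(1)]
  have card: "card (orbit \<phi> d) = 4" using assms(2) eq by simp
  show "face_of \<sigma> d = {d, \<phi> d, \<phi> (\<phi> d), \<phi> (\<phi> (\<phi> d))}"
    unfolding eq by (rule orbit_card_4(1)[OF self card])
  show "distinct [d, \<phi> d, \<phi> (\<phi> d), \<phi> (\<phi> (\<phi> d))]" "\<phi> (\<phi> (\<phi> (\<phi> d))) = d"
    by (rule orbit_card_4(2,3)[OF self card])+
qed

lemmas quadrangle_a = quadrangle[OF edge card_left]

lemmas quadrangle_b = quadrangle[OF edge' card_right]

lemma b_notin_Fa: "b \<notin> Fa" and a_notin_Fb: "a \<notin> Fb"
  using face_of_eq_if_mem[OF graph rot edge] face_of_eq_if_mem[OF graph rot edge'] distinct_faces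
  by metis+

lemma Fa_darts: "Fa \<subseteq> darts E" and Fb_darts: "Fb \<subseteq> darts E"
  using face_of_subset_darts[OF graph rot] edge edge' by auto

lemma boundary_darts:
  "\<phi> a = (u, w1)" "\<phi> (\<phi> a) = (w1, w2)" "\<phi> (\<phi> (\<phi> a)) = (w2, v)"
  "\<phi> b = (v, z1)" "\<phi> (\<phi> b) = (z1, z2)" "\<phi> (\<phi> (\<phi> b)) = (z2, u)"
proof -
  note fst_\<phi> = fst_face_perm[OF graph rot] and in_darts = face_perm_in_darts[OF graph rot]
  have a: "\<phi> a \<in> darts E" "\<phi> (\<phi> a) \<in> darts E" "\<phi> (\<phi> (\<phi> a)) \<in> darts E"
    using in_darts edge by metis+
  have b: "\<phi> b \<in> darts E" "\<phi> (\<phi> b) \<in> darts E" "\<phi> (\<phi> (\<phi> b)) \<in> darts E"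
    using in_darts edge' by metis+
  show "\<phi> a = (u, w1)" "\<phi> (\<phi> a) = (w1, w2)"
    using fst_\<phi>[OF edge] fst_\<phi>[OF a(1)] by (simp_all add: w1_def w2_def prod_eq_iff)
  show "\<phi> (\<phi> (\<phi> a)) = (w2, v)"
    using fst_\<phi>[OF a(2)] fst_\<phi>[OF a(3)] quadrangle_a(3) by (simp add: w2_def prod_eq_iff)
  show "\<phi> b = (v, z1)" "\<phi> (\<phi> b) = (z1, z2)"
    using fst_\<phi>[OF edge'] fst_\<phi>[OF b(1)] by (simp_all add: z1_def z2_def prod_eq_iff)
  show "\<phi> (\<phi> (\<phi> b)) = (z2, u)"
    using fst_\<phi>[OF b(2)] fst_\<phi>[OF b(3)] quadrangle_b(3) by (simp add: z2_def prod_eq_iff)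
qed

lemma rotation_at_edge: "\<sigma> a = \<phi> b" "\<sigma> b = \<phi> a" "\<sigma> (v, w2) = a"
  using boundary_darts(3) quadrangle_a(3) by (simp_all add: face_perm_def)

lemma not_leaf: "\<sigma> a \<noteq> a" "\<sigma> b \<noteq> b"
  using rotation_at_edge quadrangle_a(1) quadrangle_b(1) a_notin_Fb b_notin_Fa by auto

abbreviation "E' \<equiv> E - {{v, u}}"
abbreviation "\<sigma>' \<equiv> skip_edge v u \<sigma>"

definition "merged = {\<phi> a, \<phi> (\<phi> a), \<phi> (\<phi> (\<phi> a)), \<phi> b, \<phi> (\<phi> b), \<phi> (\<phi> (\<phi> b))}"

lemma graph': "simple_graph V E'"
  using graph by (auto simp: simple_graph_def)

lemma rot': "rotation_system V E' \<sigma>'"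
  using graph rot edge not_leaf by (rule rotation_system_delete_edge)

lemma merged_subset: "merged \<subseteq> Fa \<union> Fb" and ab_notin_merged: "a \<notin> merged" "b \<notin> merged"
  using quadrangle_a quadrangle_b b_notin_Fa a_notin_Fb by (auto simp: merged_def)

lemma darts_delete: "darts E' = (darts E - Fa - Fb) \<union> merged"
  using Fa_darts Fb_darts quadrangle_a(1) quadrangle_b(1) merged_subset ab_notin_merged
  unfolding darts_delete_edge by (auto simp: merged_def)

lemma merged_cycle:
  "face_perm \<sigma>' (\<phi> a) = \<phi> (\<phi> a)" "face_perm \<sigma>' (\<phi> (\<phi> a)) = \<phi> (\<phi> (\<phi> a))"
  "face_perm \<sigma>' (\<phi> (\<phi> (\<phi> a))) = \<phi> b" "face_perm \<sigma>' (\<phi> b) = \<phi> (\<phi> b)"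
  "face_perm \<sigma>' (\<phi> (\<phi> b)) = \<phi> (\<phi> (\<phi> b))" "face_perm \<sigma>' (\<phi> (\<phi> (\<phi> b))) = \<phi> a"
  using ab_notin_merged quadrangle_a(3) quadrangle_b(3) rotation_at_edge(1,2)
  by (auto simp: face_perm_skip_edge merged_def)

lemma face_of_merged: "d \<in> merged \<Longrightarrow> face_of \<sigma>' d = merged"
proof -
  have "(face_perm \<sigma>' ^^ n) (\<phi> a) \<in> merged" for n
    using merged_cycle by (intro funpow_closed) (auto simp: merged_def)
  then have "face_of \<sigma>' (\<phi> a) \<subseteq> merged" by (auto simp: face_of_def)
  moreover have "merged \<subseteq> face_of \<sigma>' (\<phi> a)"
    using face_of_self[of "\<phi> a" \<sigma>'] face_perm_in_face_of[of _ \<sigma>' "\<phi> a"]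
    unfolding merged_def by (metis empty_subsetI insert_subset merged_cycle)
  ultimately have "face_of \<sigma>' (\<phi> a) = merged" by blast
  moreover assume "d \<in> merged"
  moreover have "\<phi> a \<in> darts E'" using darts_delete by (auto simp: merged_def)
  ultimately show ?thesis using face_of_eq_if_mem[OF graph' rot'] by metis
qed

lemma face_of_eq_Fa_iff: "d \<in> darts E \<Longrightarrow> face_of \<sigma> d = Fa \<longleftrightarrow> d \<in> Fa"
  and face_of_eq_Fb_iff: "d \<in> darts E \<Longrightarrow> face_of \<sigma> d = Fb \<longleftrightarrow> d \<in> Fb"
  using face_of_self face_of_eq_if_mem[OF graph rot edge] face_of_eq_if_mem[OF graph rot edge']
  by metis+

lemma faces_other_than_Fa_Fb:
  "face_of \<sigma> ` (darts E - Fa - Fb) = faces E \<sigma> - {Fa, Fb}"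
proof (intro equalityI subsetI)
  fix F assume "F \<in> face_of \<sigma> ` (darts E - Fa - Fb)"
  then obtain d where "F = face_of \<sigma> d" "d \<in> darts E" "d \<notin> Fa" "d \<notin> Fb" by blast
  then show "F \<in> faces E \<sigma> - {Fa, Fb}"
    using face_of_eq_Fa_iff face_of_eq_Fb_iff by (auto simp: faces_def)
next
  fix F assume "F \<in> faces E \<sigma> - {Fa, Fb}"
  then obtain d where "F = face_of \<sigma> d" "d \<in> darts E" "F \<noteq> Fa" "F \<noteq> Fb"
    by (auto simp: faces_def)
  then show "F \<in> face_of \<sigma> ` (darts E - Fa - Fb)"
    using face_of_eq_Fa_iff face_of_eq_Fb_iff by blast
qed

lemma faces_delete: "faces E' \<sigma>' = (faces E \<sigma> - {Fa, Fb}) \<union> {merged}"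
proof -
  have "face_of \<sigma>' d = face_of \<sigma> d" if "d \<in> darts E - Fa - Fb" for d
  proof -
    from that have d: "d \<in> darts E" "d \<notin> Fa" "d \<notin> Fb" by auto
    have "a \<notin> face_of \<sigma> d" "b \<notin> face_of \<sigma> d"
      using face_of_eq_if_mem[OF graph rot d(1)] face_of_eq_Fa_iff[OF d(1)]
        face_of_eq_Fb_iff[OF d(1)] d(2,3) by metis+
    then show ?thesis using face_of_skip_edge[of v u \<sigma> d] by simp
  qed
  then have "face_of \<sigma>' ` (darts E - Fa - Fb) = faces E \<sigma> - {Fa, Fb}"
    using faces_other_than_Fa_Fb by (metis (no_types, lifting) image_cong)
  moreover have "face_of \<sigma>' ` merged = {merged}"
    using face_of_merged by (auto simp: merged_def)
  ultimately show ?thesis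
    unfolding faces_def[of E'] darts_delete image_Un by simp
qed

lemma merged_notin_faces: "merged \<notin> faces E \<sigma>"
proof
  assume "merged \<in> faces E \<sigma>"
  then obtain d where d: "d \<in> darts E" "merged = face_of \<sigma> d" unfolding faces_def by blast
  have "\<phi> a \<in> face_of \<sigma> d" "\<phi> a \<in> Fa"
    using quadrangle_a(1) d(2) by (auto simp: merged_def)
  then have "Fa = merged"
    using face_of_eq_if_mem[OF graph rot d(1)] face_of_eq_if_mem[OF graph rot edge] d(2) by metis
  then have "a \<in> merged" using face_of_self[of a \<sigma>] by simp
  then show False using ab_notin_merged by simp
qed

lemma reach_after_delete: "reach V E' v u"
proof -
  have "(w2, v) \<in> darts E'" "(w1, w2) \<in> darts E'" "(u, w1) \<in> darts E'"
    using darts_delete boundary_darts by (auto simp: merged_def simp del: prod.inject)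
  then have "reach V E' w2 v" "reach V E' w1 w2" "reach V E' u w1"
    using reach_dart[OF graph'] by blast+
  then show ?thesis using reach_trans reach_sym by metis
qed

lemma reach_boundary: "d \<in> Fa \<union> Fb \<Longrightarrow> reach V E v (fst d)"
  using reach_face[OF graph rot edge, of d] reach_face[OF graph rot edge', of d]
    reach_dart[OF graph edge] reach_trans by fastforce

lemma meets_component_iff:
  assumes "F \<in> {Fa, Fb, merged}"
  shows "(\<exists>d\<in>F. fst d \<in> component V E y) \<longleftrightarrow> v \<in> component V E y"
proof
  assume "\<exists>d\<in>F. fst d \<in> component V E y"
  then obtain d where d: "d \<in> F" "reach V E y (fst d)" by (auto simp: component_def)
  have "d \<in> Fa \<union> Fb" using d(1) assms merged_subset by auto
  then have "reach V E y v" using d(2) reach_boundary reach_sym reach_trans by metis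
  moreover have "v \<in> V" using dart_endpoints(1)[OF graph edge] .
  ultimately show "v \<in> component V E y" by (simp add: component_def)
next
  assume "v \<in> component V E y"
  moreover have "a \<in> Fa" "\<phi> b \<in> Fb" "\<phi> b \<in> merged"
    using face_of_self quadrangle_b(1) by (auto simp: merged_def)
  ultimately show "\<exists>d\<in>F. fst d \<in> component V E y"
    using assms boundary_darts(4) by (metis empty_iff fst_conv insert_iff)
qed

lemma euler_count_delete:
  "euler_count (component V E y) E' \<sigma>' = euler_count (component V E y) E \<sigma>"
proof -
  let ?C = "component V E y"
  let ?meets = "\<lambda>F. \<exists>d\<in>F. fst d \<in> ?C"
  let ?O = "{F \<in> faces E \<sigma> - {Fa, Fb}. ?meets F}"
  have Fab: "Fa \<in> faces E \<sigma>" "Fb \<in> faces E \<sigma>" using edge edge' by (auto simp: faces_def)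
  have finite: "finite ?O" using finite_darts[OF graph] by (simp add: faces_def)
  have meets: "?meets Fa \<longleftrightarrow> v \<in> ?C" "?meets Fb \<longleftrightarrow> v \<in> ?C" "?meets merged \<longleftrightarrow> v \<in> ?C"
    by (simp_all only: meets_component_iff insertI1 insertI2)
  have old: "{F \<in> faces E \<sigma>. ?meets F} = ?O \<union> (if v \<in> ?C then {Fa, Fb} else {})"
    using Fab meets(1,2) by auto
  have new: "{F \<in> faces E' \<sigma>'. ?meets F} = ?O \<union> (if v \<in> ?C then {merged} else {})"
    unfolding faces_delete using meets(3) by auto
  show ?thesis
  proof (cases "v \<in> ?C")
    case True
    then have "u \<in> ?C"
      using reach_dart[OF graph edge] dart_endpoints(2)[OF graph edge]
      by (auto simp: component_def intro: reach_trans)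
    then have "card {e \<in> E'. e \<subseteq> ?C} + 1 = card {e \<in> E. e \<subseteq> ?C}"
      using True edge finite_edges[OF graph]
      by (intro card_edges_within_delete_edge) (simp_all add: darts_def)
    moreover have "card {F \<in> faces E \<sigma>. ?meets F} = card ?O + 2"
      unfolding old using True finite distinct_faces by simp
    moreover have "card {F \<in> faces E' \<sigma>'. ?meets F} = card ?O + 1"
      unfolding new using True finite merged_notin_faces by simp
    ultimately show ?thesis by (simp add: euler_count_def)
  next
    case False
    then have "{e \<in> E'. e \<subseteq> ?C} = {e \<in> E. e \<subseteq> ?C}" by auto
    then show ?thesis using False old new by (simp add: euler_count_def)
  qed
qed

lemma planar': "planar_rotation_system V E' \<sigma>'"
  unfolding planar_rotation_system_iff
proof (intro conjI rot' ballI impI)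
  fix y assume "y \<in> V" and "{e \<in> E'. e \<subseteq> component V E' y} \<noteq> {}"
  then have "{e \<in> E. e \<subseteq> component V E y} \<noteq> {}"
    unfolding component_delete_edge[OF reach_after_delete] by blast
  then have "euler_count (component V E y) E \<sigma> = 2"
    using planar \<open>y \<in> V\<close> by (simp add: planar_rotation_system_iff)
  then show "euler_count (component V E' y) E' \<sigma>' = 2"
    unfolding component_delete_edge[OF reach_after_delete] euler_count_delete .
qed

lemma boundary_darts_after_delete:
  "(u, w1) \<in> darts E'" "(w1, w2) \<in> darts E'" "(w2, v) \<in> darts E'"
  "(v, z1) \<in> darts E'" "(z1, z2) \<in> darts E'" "(z2, u) \<in> darts E'"
  using darts_delete boundary_darts by (auto simp: merged_def simp del: prod.inject)

lemma dist_le2_u_after_delete: "q \<in> {z1, w2} \<Longrightarrow> dist_le2 V E' u q"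
proof -
  have "z2 \<in> V" "w1 \<in> V"
    using dart_endpoints(1)[OF graph'] boundary_darts_after_delete(6,2) by blast+
  moreover have "adj E' u z2" "adj E' z2 z1" "adj E' u w1" "adj E' w1 w2"
    unfolding adj_iff_dart using boundary_darts_after_delete(1,2)
      darts_swap[OF boundary_darts_after_delete(5)] darts_swap[OF boundary_darts_after_delete(6)]
    by blast+
  moreover assume "q \<in> {z1, w2}"
  ultimately show ?thesis unfolding dist_le2_def by blast
qed

lemma w1_neq_v: "w1 \<noteq> v"
  using boundary_darts(1) quadrangle_a(1) b_notin_Fa by auto

lemma class_F_after_delete:
  assumes "class_F V E"
  shows "class_F V E'"
proof -
  have "degree E' x \<le> degree E x" for x
    unfolding degree_eq_card_neighbors
    by (rule card_mono[OF finite_neighbors[OF graph]]) (auto simp: neighbors_def)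
  then have "max_degree_le V E' 4"
    using assms by (auto simp: class_F_def max_degree_le_def intro: order_trans)
  then show ?thesis
    using graph' planar' by (auto simp: class_F_def planar_def)
qed

context
  assumes degree_v: "degree E v = 3"
begin

lemma neighbors_v: "neighbors E v = {u, z1, w2}"
proof -
  have "\<sigma> (\<sigma> a) = (v, w2)"
  proof -
    have "\<sigma> a \<in> darts E" using rotation_in_darts[OF graph rot edge] .
    then have "\<sigma> (\<sigma> a) \<in> darts E" by (rule rotation_in_darts[OF graph rot])
    moreover have "(v, w2) \<in> darts E"
      using boundary_darts(3) face_perm_in_darts[OF graph rot] edge darts_swap by metis
    moreover have "\<sigma> (\<sigma> (\<sigma> a)) = \<sigma> (v, w2)"
      using degree_3_rotation(3)[OF graph rot degree_v edge] rotation_at_edge(3) by simp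
    ultimately show ?thesis
      using rotation_bij_betw[OF graph rot] by (auto simp: bij_betw_def dest: inj_onD)
  qed
  then have darts_v: "{d \<in> darts E. fst d = v} = {(v, u), (v, z1), (v, w2)}"
    using degree_3_rotation(1)[OF graph rot degree_v edge] rotation_at_edge(1) boundary_darts(4)
    by simp
  have "x \<in> neighbors E v \<longleftrightarrow> (v, x) \<in> {d \<in> darts E. fst d = v}" for x
    by (simp add: neighbors_iff_dart)
  then show ?thesis unfolding darts_v by blast
qed

lemma dist_le2_after_delete:
  assumes "x \<noteq> v" "y \<noteq> v" "x \<noteq> y" "dist_le2 V E x y"
  shows "dist_le2 V E' x y"
proof -
  have kept: "adj E' p q" if "adj E p q" "p \<noteq> v" "q \<noteq> v" for p q
    using that by (auto simp: adj_def doubleton_eq_iff)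
  consider (adjacent) "adj E x y" | (via_other) w where "w \<in> V" "adj E x w" "adj E w y" "w \<noteq> v"
    | (via_v) "adj E x v" "adj E v y"
    using assms(4) unfolding dist_le2_def by metis
  then show ?thesis
  proof cases
    case adjacent
    then show ?thesis using kept assms(1,2) by (simp add: dist_le2_def)
  next
    case (via_other w)
    then have "adj E' x w" "adj E' w y" using kept assms(1,2) by simp_all
    then show ?thesis using via_other(1) unfolding dist_le2_def by blast
  next
    case via_v
    then have "(v, x) \<in> darts E" "(v, y) \<in> darts E"
      unfolding adj_iff_dart by (auto intro: darts_swap)
    then have xy: "x \<in> {u, z1, w2}" "y \<in> {u, z1, w2}"
      using neighbors_v unfolding neighbors_iff_dart[symmetric] by simp_all
    consider (x_is_u) "x = u" | (y_is_u) "y = u" | (neither) "x \<noteq> u" "y \<noteq> u" by blast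
    then show ?thesis
    proof cases
      case x_is_u
      then show ?thesis using dist_le2_u_after_delete xy(2) assms(3) by simp
    next
      case y_is_u
      then show ?thesis
        using dist_le2_u_after_delete xy(1) assms(3) dist_le2_commute[of V E' x y] by simp
    next
      case neither
      then have "adj E' x v" "adj E' v y" using via_v by (auto simp: adj_def doubleton_eq_iff)
      then show ?thesis using dart_endpoints(1)[OF graph edge] unfolding dist_le2_def by blast
    qed
  qed
qed

lemma card_dist2_ball:
  assumes "max_degree_le V E 4"
  shows "card {x \<in> V. x \<noteq> v \<and> dist_le2 V E v x} \<le> 11"
proof -
  let ?N = "\<lambda>y. neighbors E y - {v}"
  have finite: "finite (?N y)" for y using finite_neighbors[OF graph] by simp
  have at_most_3: "card (?N y) \<le> 3" if "y \<in> neighbors E v" for y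
  proof -
    have "y \<in> V" using that dart_endpoints(2)[OF graph] by (simp add: neighbors_iff_dart)
    then have "card (neighbors E y) \<le> 4"
      using assms by (simp add: max_degree_le_def degree_eq_card_neighbors)
    moreover have "v \<in> neighbors E y" using that by (simp add: neighbors_def insert_commute)
    ultimately show ?thesis by (simp add: card_Diff_singleton finite_neighbors[OF graph])
  qed
  have "w1 \<in> ?N u \<inter> ?N w2"
    using boundary_darts_after_delete(1) darts_swap[OF boundary_darts_after_delete(2)] w1_neq_v
    by (auto simp: neighbors_iff_dart darts_delete_edge)
  then have "card (?N u \<inter> ?N w2) \<ge> 1"
    using finite by (metis One_nat_def Suc_leI card_gt_0_iff empty_iff finite_Int)
  moreover have "card (?N u) + card (?N w2) = card (?N u \<union> ?N w2) + card (?N u \<inter> ?N w2)"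
    using finite[of u] finite[of w2] by (rule card_Un_Int)
  moreover have "card (?N u) \<le> 3" "card (?N w2) \<le> 3" "card (?N z1) \<le> 3"
    using at_most_3 neighbors_v by simp_all
  ultimately have "card ((?N u \<union> ?N w2) \<union> ?N z1) \<le> 8"
    using card_Un_le[of "?N u \<union> ?N w2" "?N z1"] by linarith
  moreover have "card {u, z1, w2} \<le> 3" by (simp add: card_insert_le_m1)
  ultimately have "card ({u, z1, w2} \<union> ((?N u \<union> ?N w2) \<union> ?N z1)) \<le> 11"
    using card_Un_le[of "{u, z1, w2}" "(?N u \<union> ?N w2) \<union> ?N z1"] by linarith
  moreover have "{x \<in> V. x \<noteq> v \<and> dist_le2 V E v x} \<subseteq> {u, z1, w2} \<union> ((?N u \<union> ?N w2) \<union> ?N z1)"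
    using dist2_ball_subset[of V v E] unfolding neighbors_v by blast
  moreover have "finite ({u, z1, w2} \<union> ((?N u \<union> ?N w2) \<union> ?N z1))" using finite by simp
  ultimately show ?thesis by (meson card_mono order_trans)
qed

lemma dist2_coloring_after_delete:
  assumes "max_degree_le V E 4" "dist2_coloring V E' c 12"
  shows "\<exists>c'. dist2_coloring V E c' 12"
  using assms(2) dist_le2_after_delete
proof (rule dist2_coloring_extend)
  show "finite V" using graph by (simp add: simple_graph_def)
  show "card {x \<in> V. x \<noteq> v \<and> dist_le2 V E v x} < 12"
    using card_dist2_ball[OF assms(1)] by simp
qed

end

end

theorem lemma9:
  fixes V :: "'a set" and E :: "'a set set" and \<sigma> :: "'a \<times> 'a \<Rightarrow> 'a \<times> 'a"
  assumes inF: "class_F V E"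
    and chi: "chi2 V E > 12"
    and minimal: "\<And>(W :: nat set) F. class_F W F \<Longrightarrow> chi2 W F > 12 \<Longrightarrow>
         \<not> (card W < card V \<or> (card W = card V \<and> card F < card E))"
    and emb: "planar_rotation_system V E \<sigma>"
  shows "\<not> (\<exists>v\<in>V. degree E v = 3 \<and>
            (\<exists>f1 \<in> faces E \<sigma>. \<exists>f2 \<in> faces E \<sigma>. f1 \<noteq> f2 \<and>
               face_degree f1 = 4 \<and> face_degree f2 = 4 \<and>
               incident_face v f1 \<and> incident_face v f2))"
proof
  assume "\<exists>v\<in>V. degree E v = 3 \<and>
            (\<exists>f1 \<in> faces E \<sigma>. \<exists>f2 \<in> faces E \<sigma>. f1 \<noteq> f2 \<and>
               face_degree f1 = 4 \<and> face_degree f2 = 4 \<and>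
               incident_face v f1 \<and> incident_face v f2)"
  then obtain v f1 f2 where v: "degree E v = 3" "f1 \<in> faces E \<sigma>" "f2 \<in> faces E \<sigma>" "f1 \<noteq> f2"
    "face_degree f1 = 4" "face_degree f2 = 4" "incident_face v f1" "incident_face v f2" by blast
  have graph: "simple_graph V E" using inF by (simp add: class_F_def)
  have rot: "rotation_system V E \<sigma>" using emb by (simp add: planar_rotation_system_def)
  obtain u where u: "(v, u) \<in> darts E" "{face_of \<sigma> (v, u), face_of \<sigma> (u, v)} = {f1, f2}"
    using degree_3_edge_between_faces[OF graph rot v(1-4,7,8)] by blast
  interpret quadrangle_pair V E \<sigma> v u
    using graph emb u v(4-6) by unfold_locales (auto simp: face_degree_def doubleton_eq_iff)
  txt \<open>Minimality only speaks about graphs on nat, so G - uv is renamed first.\<close>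
  obtain f :: "'a \<Rightarrow> nat" where f: "inj_on f V"
    using finite_imp_inj_to_nat_seg graph by (metis simple_graph_def)
  interpret renamed: graph_renaming V E' f using graph' f by unfold_locales
  have "{v, u} \<in> E" using edge by (simp add: darts_def)
  then have "card (image f ` E') < card E"
    unfolding renamed.card_edges_image by (rule card_Diff1_less[OF finite_edges[OF graph]])
  moreover have "card (f ` V) = card V" using f by (rule card_image)
  moreover have "class_F (f ` V) (image f ` E')" using class_F_image class_F_after_delete inF f by blast
  ultimately have "chi2 (f ` V) (image f ` E') \<le> 12" using minimal by force
  then obtain c where "dist2_coloring V E' c 12" using renamed.dist2_coloring_if_chi2_image_le by blast
  then obtain c' where "dist2_coloring V E c' 12"
    using dist2_coloring_after_delete[OF v(1)] inF by (auto simp: class_F_def)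
  then show False using chi chi2_le by fastforce
qed

end
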